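(* The tree patterns $(21435,\text{-}1\text{-}\text{-})$ and $(13254,1\text{-}1\text{-})$ are Wilf-equivalent; that is, for all choices of values in $\{0,1\}$ at the positions marked "-", and all $n\ge0$, $|\mathcal{T}_n(21435,x1yz)|=|\mathcal{T}_n(13254,1u1v)|$.
   Context: $\mathcal{T}_n$ is the set of binary trees on $n$ vertices labeled $1,\dots,n$ by the search tree property. $c_L,c_R,p$: left child, right child, parent. A tree pattern is $(P,e)$, $P\in\mathcal{T}_k$, $e\colon[k]\setminus\{\text{root}\}\to\{0,1\}$ ($e(i)=1$: edge to the parent contiguous; $0$: non-contiguous). $T\in\mathcal{T}_n$ contains $(P,e)$ if there is an injection $f\colon[k]\to[n]$ such that for every non-root $i$ of $P$: if $e(i)=1$, $f(i)$ is the left (resp. right) child of $f(p(i))$ when $i$ is the left (resp. right) child of $p(i)$; if $e(i)=0$, $f(i)$ lies in the left (resp. right) subtree of $f(p(i))$. $\mathcal{T}_n(P,e)$ is the set of avoiders. Compact notation: $(\tau_1\cdots\tau_k,\,x_2\cdots x_k)$ denotes the pattern whose preorder vertex sequence (root, then left subtree recursively, then right subtree recursively) is $\tau_1,\dots,\tau_k$ and with $e(\tau_j)=x_j$. A hyphen "-" in the second component is a placeholder whose value (0 or 1) does not affect the set of avoiding trees. *)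

theory Defs
  imports Main "HOL-Library.Tree"
begin

text \<open>Binary trees on vertices 1..n labeled by the search tree property:
  the in-order reading of the labels is 1,2,...,n.\<close>
definition trees :: "nat \<Rightarrow> nat tree set" where
  "trees n = {t. inorder t = [1..<n+1]}"

definition is_left_child :: "nat tree \<Rightarrow> nat \<Rightarrow> nat \<Rightarrow> bool" where
  "is_left_child t i j \<longleftrightarrow> (\<exists>l' r' r. Node (Node l' i r') j r \<in> subtrees t)"

definition is_right_child :: "nat tree \<Rightarrow> nat \<Rightarrow> nat \<Rightarrow> bool" where
  "is_right_child t i j \<longleftrightarrow> (\<exists>l l' r'. Node l j (Node l' i r') \<in> subtrees t)"

definition in_left_subtree :: "nat tree \<Rightarrow> nat \<Rightarrow> nat \<Rightarrow> bool" where
  "in_left_subtree t i j \<longleftrightarrow> (\<exists>l r. Node l j r \<in> subtrees t \<and> i \<in> set_tree l)"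

definition in_right_subtree :: "nat tree \<Rightarrow> nat \<Rightarrow> nat \<Rightarrow> bool" where
  "in_right_subtree t i j \<longleftrightarrow> (\<exists>l r. Node l j r \<in> subtrees t \<and> i \<in> set_tree r)"

text \<open>T contains the tree pattern (P,e); e i = True means the edge from i to its
  parent is contiguous (value 1). The value of e at the root is never used.\<close>
definition contains :: "nat tree \<Rightarrow> nat tree \<Rightarrow> (nat \<Rightarrow> bool) \<Rightarrow> bool" where
  "contains T P e \<longleftrightarrow> (\<exists>f. inj_on f (set_tree P) \<and> f ` set_tree P \<subseteq> set_tree T \<and>
     (\<forall>i j. is_left_child P i j \<longrightarrow>
        (if e i then is_left_child T (f i) (f j) else in_left_subtree T (f i) (f j))) \<and>
     (\<forall>i j. is_right_child P i j \<longrightarrow>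
        (if e i then is_right_child T (f i) (f j) else in_right_subtree T (f i) (f j))))"

definition avoiders :: "nat \<Rightarrow> nat tree \<Rightarrow> (nat \<Rightarrow> bool) \<Rightarrow> nat tree set" where
  "avoiders n P e = {T \<in> trees n. \<not> contains T P e}"

text \<open>Pattern 21435 (preorder 2,1,4,3,5): root 2, left child 1, right child 4
  with children 3 and 5. Edge labels -1-- : e(1)=x, e(4)=1, e(3)=y, e(5)=z.\<close>
definition P21435 :: "nat tree" where
  "P21435 = Node (Node Leaf 1 Leaf) 2 (Node (Node Leaf 3 Leaf) 4 (Node Leaf 5 Leaf))"

definition e21435 :: "bool \<Rightarrow> bool \<Rightarrow> bool \<Rightarrow> nat \<Rightarrow> bool" where
  "e21435 x y z i = (if i = 1 then x else if i = 4 then True else if i = 3 then y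
                     else if i = 5 then z else False)"

text \<open>Pattern 13254 (preorder 1,3,2,5,4): root 1, right child 3 with left child 2
  and right child 5, and 4 the left child of 5. Edge labels 1-1- :
  e(3)=1, e(2)=u, e(5)=1, e(4)=v.\<close>
definition P13254 :: "nat tree" where
  "P13254 = Node Leaf 1 (Node (Node Leaf 2 Leaf) 3 (Node (Node Leaf 4 Leaf) 5 Leaf))"

definition e13254 :: "bool \<Rightarrow> bool \<Rightarrow> nat \<Rightarrow> bool" where
  "e13254 u v i = (if i = 3 then True else if i = 2 then u else if i = 5 then True
                   else if i = 4 then v else False)"

end

theory Submission
  imports Defs
begin

(* In a tree with distinct labels, an occurrence of (21435,-1--) is the same as a node with a
   nonempty left subtree whose right child has two nonempty subtrees, and an occurrence of
   (13254,1-1-) is the same as a node whose right child and right grandchild both have nonempty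
   left subtrees. Record along a right spine which nodes have a nonempty left subtree: the first
   configuration is two consecutive marked nodes, the second of which is not the last node of the
   spine, and the second configuration is two consecutive marked nodes, the first of which is not
   the first node of the spine. Reversing every right spine, recursively inside the left subtrees,
   and then relabelling in order is therefore an involution on search trees with n vertices that
   exchanges the avoiders of the two patterns. *)

lemma subtrees_trans: "s \<in> subtrees t \<Longrightarrow> t \<in> subtrees u \<Longrightarrow> s \<in> subtrees u"
  by (induction u) auto

lemma set_tree_mono_subtrees: "s \<in> subtrees t \<Longrightarrow> set_tree s \<subseteq> set_tree t"
  by (induction t) auto

lemma distinct_inorder_subtree:
  "s \<in> subtrees t \<Longrightarrow> distinct (inorder t) \<Longrightarrow> distinct (inorder s)"
  by (induction t) auto

lemma subtrees_Node_unique: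
  assumes "distinct (inorder T)" "Node l a r \<in> subtrees T" "Node l' a r' \<in> subtrees T"
  shows "l = l' \<and> r = r'"
  using assms
proof (induction T)
  case (Node L c R)
  have "c \<notin> set_tree L" "c \<notin> set_tree R" "set_tree L \<inter> set_tree R = {}"
    using Node.prems(1) by (auto simp flip: set_inorder)
  with Node show ?case by (fastforce dest: in_set_tree_if)
qed simp

lemma subtrees_map_tree: "subtrees (map_tree f t) = map_tree f ` subtrees t"
  by (induction t) auto

fun root_shape_21435 :: "'a tree \<Rightarrow> bool" where
  "root_shape_21435 (Node l _ (Node rl _ rr)) \<longleftrightarrow> l \<noteq> Leaf \<and> rl \<noteq> Leaf \<and> rr \<noteq> Leaf"
| "root_shape_21435 _ \<longleftrightarrow> False"

fun root_shape_13254 :: "'a tree \<Rightarrow> bool" where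
  "root_shape_13254 (Node _ _ (Node rl _ (Node rrl _ _))) \<longleftrightarrow> rl \<noteq> Leaf \<and> rrl \<noteq> Leaf"
| "root_shape_13254 _ \<longleftrightarrow> False"

definition has_shape_21435 :: "'a tree \<Rightarrow> bool" where
  "has_shape_21435 t \<longleftrightarrow> (\<exists>s\<in>subtrees t. root_shape_21435 s)"

definition has_shape_13254 :: "'a tree \<Rightarrow> bool" where
  "has_shape_13254 t \<longleftrightarrow> (\<exists>s\<in>subtrees t. root_shape_13254 s)"

lemma has_shape_21435_Node:
  "has_shape_21435 (Node l a r) \<longleftrightarrow>
     root_shape_21435 (Node l a r) \<or> has_shape_21435 l \<or> has_shape_21435 r"
  by (auto simp: has_shape_21435_def)

lemma has_shape_13254_Node:
  "has_shape_13254 (Node l a r) \<longleftrightarrow>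
     root_shape_13254 (Node l a r) \<or> has_shape_13254 l \<or> has_shape_13254 r"
  by (auto simp: has_shape_13254_def)

lemma has_shape_21435_map_tree: "has_shape_21435 (map_tree f t) \<longleftrightarrow> has_shape_21435 t"
proof -
  have "root_shape_21435 (map_tree f s) \<longleftrightarrow> root_shape_21435 s" for s
    by (cases s rule: root_shape_21435.cases) auto
  then show ?thesis by (simp add: has_shape_21435_def subtrees_map_tree)
qed

lemma has_shape_13254_map_tree: "has_shape_13254 (map_tree f t) \<longleftrightarrow> has_shape_13254 t"
proof -
  have "root_shape_13254 (map_tree f s) \<longleftrightarrow> root_shape_13254 s" for s
    by (cases s rule: root_shape_13254.cases) auto
  then show ?thesis by (simp add: has_shape_13254_def subtrees_map_tree)
qed

lemma in_left_subtree_if_edge: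
  "(if c then is_left_child T i j else in_left_subtree T i j) \<Longrightarrow> in_left_subtree T i j"
  by (cases c) (force simp: is_left_child_def in_left_subtree_def)+

lemma in_right_subtree_if_edge:
  "(if c then is_right_child T i j else in_right_subtree T i j) \<Longrightarrow> in_right_subtree T i j"
  by (cases c) (force simp: is_right_child_def in_right_subtree_def)+

lemma in_left_subtree_Node:
  "distinct (inorder T) \<Longrightarrow> in_left_subtree T i j \<Longrightarrow> Node l j r \<in> subtrees T \<Longrightarrow>
     i \<in> set_tree l"
  unfolding in_left_subtree_def by (blast dest: subtrees_Node_unique)

lemma in_right_subtree_Node:
  "distinct (inorder T) \<Longrightarrow> in_right_subtree T i j \<Longrightarrow> Node l j r \<in> subtrees T \<Longrightarrow>
     i \<in> set_tree r"
  unfolding in_right_subtree_def by (blast dest: subtrees_Node_unique)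

lemma contains_if_child_embedding:
  assumes "inj_on f (set_tree P)" "f ` set_tree P \<subseteq> set_tree T"
    and "\<And>i j. is_left_child P i j \<Longrightarrow> is_left_child T (f i) (f j)"
    and "\<And>i j. is_right_child P i j \<Longrightarrow> is_right_child T (f i) (f j)"
  shows "contains T P e"
  unfolding contains_def using assms
  by (intro exI[of _ f])
    (force simp: is_left_child_def in_left_subtree_def is_right_child_def in_right_subtree_def)

lemma P21435_simps:
  "set_tree P21435 = {1, 2, 3, 4, 5}"
  "is_left_child P21435 i j \<longleftrightarrow> i = 1 \<and> j = 2 \<or> i = 3 \<and> j = 4"
  "is_right_child P21435 i j \<longleftrightarrow> i = 4 \<and> j = 2 \<or> i = 5 \<and> j = 4"
  by (auto simp: P21435_def is_left_child_def is_right_child_def)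

lemma P13254_simps:
  "set_tree P13254 = {1, 2, 3, 4, 5}"
  "is_left_child P13254 i j \<longleftrightarrow> i = 2 \<and> j = 3 \<or> i = 4 \<and> j = 5"
  "is_right_child P13254 i j \<longleftrightarrow> i = 3 \<and> j = 1 \<or> i = 5 \<and> j = 3"
  by (auto simp: P13254_def is_left_child_def is_right_child_def)

lemma has_shape_21435_if_contains:
  assumes "distinct (inorder T)" "contains T P21435 (e21435 x y z)"
  shows "has_shape_21435 T"
proof -
  obtain f where
    L: "\<And>i j. is_left_child P21435 i j \<Longrightarrow> (if e21435 x y z i
          then is_left_child T (f i) (f j) else in_left_subtree T (f i) (f j))" and
    R: "\<And>i j. is_right_child P21435 i j \<Longrightarrow> (if e21435 x y z i
          then is_right_child T (f i) (f j) else in_right_subtree T (f i) (f j))"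
    using assms(2) unfolding contains_def by blast
  have "is_right_child T (f 4) (f 2)"
    using R[of 4 2] by (simp add: P21435_simps e21435_def)
  then obtain l r1 r2 where top: "Node l (f 2) (Node r1 (f 4) r2) \<in> subtrees T"
    unfolding is_right_child_def by blast
  then have right: "Node r1 (f 4) r2 \<in> subtrees T"
    by (rule subtrees_trans[rotated]) simp
  have "f 1 \<in> set_tree l"
    using in_left_subtree_Node[OF assms(1) in_left_subtree_if_edge[OF L] top]
    by (simp add: P21435_simps)
  moreover have "f 3 \<in> set_tree r1"
    using in_left_subtree_Node[OF assms(1) in_left_subtree_if_edge[OF L] right]
    by (simp add: P21435_simps)
  moreover have "f 5 \<in> set_tree r2"
    using in_right_subtree_Node[OF assms(1) in_right_subtree_if_edge[OF R] right]
    by (simp add: P21435_simps)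
  ultimately have "root_shape_21435 (Node l (f 2) (Node r1 (f 4) r2))"
    by auto
  with top show ?thesis
    unfolding has_shape_21435_def by blast
qed

lemma has_shape_13254_if_contains:
  assumes "distinct (inorder T)" "contains T P13254 (e13254 u v)"
  shows "has_shape_13254 T"
proof -
  obtain f where
    L: "\<And>i j. is_left_child P13254 i j \<Longrightarrow> (if e13254 u v i
          then is_left_child T (f i) (f j) else in_left_subtree T (f i) (f j))" and
    R: "\<And>i j. is_right_child P13254 i j \<Longrightarrow> (if e13254 u v i
          then is_right_child T (f i) (f j) else in_right_subtree T (f i) (f j))"
    using assms(2) unfolding contains_def by blast
  have "is_right_child T (f 3) (f 1)" "is_right_child T (f 5) (f 3)"
    using R[of 3 1] R[of 5 3] by (simp_all add: P13254_simps e13254_def)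
  then obtain l r1 r2 l' r3 r4 where top: "Node l (f 1) (Node r1 (f 3) r2) \<in> subtrees T"
    and mid: "Node l' (f 3) (Node r3 (f 5) r4) \<in> subtrees T"
    unfolding is_right_child_def by blast
  have right: "Node r1 (f 3) r2 \<in> subtrees T"
    using top by (rule subtrees_trans[rotated]) simp
  then have r2: "r2 = Node r3 (f 5) r4"
    using subtrees_Node_unique[OF assms(1) _ mid] by blast
  have bottom: "Node r3 (f 5) r4 \<in> subtrees T"
    using mid by (rule subtrees_trans[rotated]) simp
  have "f 2 \<in> set_tree r1"
    using in_left_subtree_Node[OF assms(1) in_left_subtree_if_edge[OF L] right]
    by (simp add: P13254_simps)
  moreover have "f 4 \<in> set_tree r3"
    using in_left_subtree_Node[OF assms(1) in_left_subtree_if_edge[OF L] bottom]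
    by (simp add: P13254_simps)
  ultimately have "root_shape_13254 (Node l (f 1) (Node r1 (f 3) r2))"
    using r2 by auto
  with top show ?thesis
    unfolding has_shape_13254_def by blast
qed

lemma contains_if_has_shape_21435:
  assumes "distinct (inorder T)" "has_shape_21435 T"
  shows "contains T P21435 e"
proof -
  obtain l1 c1 l2 a m1 c3 m2 b n1 c5 n2 where
    top: "Node (Node l1 c1 l2) a (Node (Node m1 c3 m2) b (Node n1 c5 n2)) \<in> subtrees T"
      (is "?S \<in> _")
    using assms(2) unfolding has_shape_21435_def
    by (elim bexE root_shape_21435.elims) (auto simp: neq_Leaf_iff)
  have right: "Node (Node m1 c3 m2) b (Node n1 c5 n2) \<in> subtrees T"
    using top by (rule subtrees_trans[rotated]) simp
  have "distinct (inorder ?S)"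
    using distinct_inorder_subtree[OF top assms(1)] .
  then have "distinct [c1, a, c3, b, c5]"
    by auto
  moreover have "set [c1, a, c3, b, c5] \<subseteq> set_tree T"
    using set_tree_mono_subtrees[OF top] by auto
  ultimately show ?thesis
    using top right
    by (intro contains_if_child_embedding[where f = "\<lambda>i. [c1, a, c3, b, c5] ! (i - 1)"])
      (auto simp: P21435_simps inj_on_def is_left_child_def[of T] is_right_child_def[of T], blast+)
qed

lemma contains_if_has_shape_13254:
  assumes "distinct (inorder T)" "has_shape_13254 T"
  shows "contains T P13254 e"
proof -
  obtain l a m1 c2 m2 b n1 c4 n2 c r where
    top: "Node l a (Node (Node m1 c2 m2) b (Node (Node n1 c4 n2) c r)) \<in> subtrees T"
      (is "?S \<in> _")
    using assms(2) unfolding has_shape_13254_def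
    by (elim bexE root_shape_13254.elims) (auto simp: neq_Leaf_iff)
  have mid: "Node (Node m1 c2 m2) b (Node (Node n1 c4 n2) c r) \<in> subtrees T"
    using top by (rule subtrees_trans[rotated]) simp
  have bottom: "Node (Node n1 c4 n2) c r \<in> subtrees T"
    using mid by (rule subtrees_trans[rotated]) simp
  have "distinct (inorder ?S)"
    using distinct_inorder_subtree[OF top assms(1)] .
  then have "distinct [a, c2, b, c4, c]"
    by auto
  moreover have "set [a, c2, b, c4, c] \<subseteq> set_tree T"
    using set_tree_mono_subtrees[OF top] by auto
  ultimately show ?thesis
    using top mid bottom
    by (intro contains_if_child_embedding[where f = "\<lambda>i. [a, c2, b, c4, c] ! (i - 1)"])
      (auto simp: P13254_simps inj_on_def is_left_child_def[of T] is_right_child_def[of T], blast+)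
qed

lemma contains_P21435_iff:
  "distinct (inorder T) \<Longrightarrow> contains T P21435 (e21435 x y z) \<longleftrightarrow> has_shape_21435 T"
  using has_shape_21435_if_contains contains_if_has_shape_21435 by blast

lemma contains_P13254_iff:
  "distinct (inorder T) \<Longrightarrow> contains T P13254 (e13254 u v) \<longleftrightarrow> has_shape_13254 T"
  using has_shape_13254_if_contains contains_if_has_shape_13254 by blast

lemma avoiders_P21435: "avoiders n P21435 (e21435 x y z) = {T \<in> trees n. \<not> has_shape_21435 T}"
  by (auto simp: avoiders_def trees_def contains_P21435_iff)

lemma avoiders_P13254: "avoiders n P13254 (e13254 u v) = {T \<in> trees n. \<not> has_shape_13254 T}"
  by (auto simp: avoiders_def trees_def contains_P13254_iff)

fun spine :: "'a tree \<Rightarrow> ('a tree \<times> 'a) list" where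
  "spine Leaf = []"
| "spine (Node l a r) = (l, a) # spine r"

lemma spine_inject: "spine s = spine t \<longleftrightarrow> s = t"
proof (induction s arbitrary: t)
  case Leaf
  then show ?case by (cases t) auto
next
  case (Node l a r)
  then show ?case by (cases t) auto
qed

lemma size_less_if_in_spine: "(l, a) \<in> set (spine t) \<Longrightarrow> size l < size t"
  by (induction t) auto

fun rev_spine_onto :: "'a tree \<Rightarrow> 'a tree \<Rightarrow> 'a tree" where
  "rev_spine_onto acc Leaf = acc"
| "rev_spine_onto acc (Node l a r) = rev_spine_onto (Node (rev_spine_onto Leaf l) a acc) r"

abbreviation rev_spines :: "'a tree \<Rightarrow> 'a tree" where
  "rev_spines \<equiv> rev_spine_onto Leaf"

lemma spine_rev_spine_onto:
  "spine (rev_spine_onto acc t) = rev (map (apfst rev_spines) (spine t)) @ spine acc"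
  by (induction acc t rule: rev_spine_onto.induct) auto

lemma size_rev_spine_onto: "size (rev_spine_onto acc t) = size acc + size t"
  by (induction acc t rule: rev_spine_onto.induct) auto

lemma map_tree_rev_spine_onto:
  "map_tree f (rev_spine_onto acc t) = rev_spine_onto (map_tree f acc) (map_tree f t)"
  by (induction acc t rule: rev_spine_onto.induct) auto

lemma rev_spines_eq_Leaf_iff [simp]: "rev_spines t = Leaf \<longleftrightarrow> t = Leaf"
  by (metis size_rev_spine_onto[of Leaf t] add_0 eq_size_0 tree.size(3))

lemma rev_spines_rev_spines: "rev_spines (rev_spines t) = t"
proof (induction t rule: measure_induct_rule[of size])
  case (less t)
  have "(apfst rev_spines \<circ> apfst rev_spines) (l, a) = (l, a)" if "(l, a) \<in> set (spine t)" for l a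
    using less[OF size_less_if_in_spine[OF that]] by simp
  then have "map (apfst rev_spines \<circ> apfst rev_spines) (spine t) = spine t"
    by (intro map_idI) force
  then have "spine (rev_spines (rev_spines t)) = spine t"
    by (simp add: spine_rev_spine_onto rev_map apfst_compose)
  then show ?case by (simp add: spine_inject)
qed

definition left_flags :: "'a tree \<Rightarrow> bool list" where
  "left_flags t = map (\<lambda>(l, _). l \<noteq> Leaf) (spine t)"

lemma left_flags_simps [simp]:
  "left_flags Leaf = []"
  "left_flags (Node l a r) = (l \<noteq> Leaf) # left_flags r"
  by (simp_all add: left_flags_def)

lemma left_flags_rev_spines: "left_flags (rev_spines t) = rev (left_flags t)"
  by (simp add: left_flags_def spine_rev_spine_onto rev_map comp_def case_prod_beta apfst_def map_prod_def)

abbreviation no_two_adjacent :: "bool list \<Rightarrow> bool" where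
  "no_two_adjacent \<equiv> successively (\<lambda>a b. \<not> (a \<and> b))"

lemma no_two_adjacent_rev:
  "no_two_adjacent (rev xs) \<longleftrightarrow> no_two_adjacent xs"
  unfolding successively_rev by (intro successively_cong) auto

lemma no_two_adjacent_butlast_left_flags_Node:
  "no_two_adjacent (butlast (left_flags (Node l a r))) \<longleftrightarrow>
     \<not> root_shape_21435 (Node l a r) \<and> no_two_adjacent (butlast (left_flags r))"
proof (cases r)
  case (Node rl b rr)
  then show ?thesis by (cases rr) auto
qed simp

lemma no_two_adjacent_tl_left_flags_Node:
  "no_two_adjacent (tl (left_flags (Node l a r))) \<longleftrightarrow>
     \<not> root_shape_13254 (Node l a r) \<and> no_two_adjacent (tl (left_flags r))"
proof (cases r)
  case (Node rl b rr)
  then show ?thesis by (cases rr) auto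
qed simp

lemma has_shape_21435_spine:
  "has_shape_21435 t \<longleftrightarrow>
     (\<exists>(l, _)\<in>set (spine t). has_shape_21435 l) \<or> \<not> no_two_adjacent (butlast (left_flags t))"
proof (induction t)
  case (Node l a r)
  then show ?case
    using has_shape_21435_Node[of l a r] unfolding no_two_adjacent_butlast_left_flags_Node by auto
qed (simp add: has_shape_21435_def)

lemma has_shape_13254_spine:
  "has_shape_13254 t \<longleftrightarrow>
     (\<exists>(l, _)\<in>set (spine t). has_shape_13254 l) \<or> \<not> no_two_adjacent (tl (left_flags t))"
proof (induction t)
  case (Node l a r)
  then show ?case
    using has_shape_13254_Node[of l a r] unfolding no_two_adjacent_tl_left_flags_Node by auto
qed (simp add: has_shape_13254_def)

lemma has_shape_13254_rev_spines: "has_shape_13254 (rev_spines t) \<longleftrightarrow> has_shape_21435 t"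
proof (induction t rule: measure_induct_rule[of size])
  case (less t)
  have left_subtrees: "(\<exists>(l, _)\<in>set (spine (rev_spines t)). has_shape_13254 l) \<longleftrightarrow>
      (\<exists>(l, _)\<in>set (spine t). has_shape_21435 l)"
    using less size_less_if_in_spine by (force simp: spine_rev_spine_onto)
  have flags: "tl (left_flags (rev_spines t)) = rev (butlast (left_flags t))"
    by (simp add: left_flags_rev_spines) (metis butlast_rev rev_rev_ident)
  show ?case
    unfolding has_shape_13254_spine[of "rev_spines t"] has_shape_21435_spine[of t]
      left_subtrees flags no_two_adjacent_rev ..
qed

lemma has_shape_21435_rev_spines: "has_shape_21435 (rev_spines t) \<longleftrightarrow> has_shape_13254 t"
  by (metis has_shape_13254_rev_spines rev_spines_rev_spines)

fun relabel :: "nat \<Rightarrow> 'a tree \<Rightarrow> nat tree" where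
  "relabel k Leaf = Leaf"
| "relabel k (Node l _ r) = Node (relabel k l) (k + size l) (relabel (k + size l + 1) r)"

lemma upt_split_at: "[k..<k + a + 1 + b] = [k..<k + a] @ (k + a) # [k + a + 1..<k + a + 1 + b]"
proof -
  have "[k..<k + a + 1 + b] = [k..<k + a] @ [k + a..<k + a + 1 + b]"
    by (metis le_add1 upt_add_eq_append add.assoc)
  also have "[k + a..<k + a + 1 + b] = (k + a) # [k + a + 1..<k + a + 1 + b]"
    by (simp add: upt_conv_Cons)
  finally show ?thesis .
qed

lemma inorder_relabel: "inorder (relabel k t) = [k..<k + size t]"
proof (induction t arbitrary: k)
  case (Node l a r)
  then show ?case
    using upt_split_at[of k "size l" "size r"] by (simp add: add.assoc)
qed simp

lemma relabel_eq_self: "inorder t = [k..<k + size t] \<Longrightarrow> relabel k t = t"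
proof (induction t arbitrary: k)
  case (Node l a r)
  have "inorder l @ a # inorder r = [k..<k + size l] @ (k + size l) # [k + size l + 1..<k + size l + 1 + size r]"
    using Node.prems upt_split_at[of k "size l" "size r"] by (simp add: add.assoc)
  then have "inorder l = [k..<k + size l]" "a = k + size l"
    "inorder r = [k + size l + 1..<k + size l + 1 + size r]"
    by (simp_all add: append_eq_append_conv)
  with Node.IH show ?case by simp
qed simp

lemma relabel_map_tree: "relabel k (map_tree f t) = relabel k t"
  by (induction t arbitrary: k) auto

lemma map_tree_relabel_const: "map_tree (\<lambda>_. c) (relabel k t) = map_tree (\<lambda>_. c) t"
  by (induction t arbitrary: k) auto

lemma has_shape_21435_relabel: "has_shape_21435 (relabel k t) \<longleftrightarrow> has_shape_21435 t"
  using has_shape_21435_map_tree[of "\<lambda>_. ()" "relabel k t"] has_shape_21435_map_tree[of "\<lambda>_. ()" t]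
  by (simp only: map_tree_relabel_const)

lemma has_shape_13254_relabel: "has_shape_13254 (relabel k t) \<longleftrightarrow> has_shape_13254 t"
  using has_shape_13254_map_tree[of "\<lambda>_. ()" "relabel k t"] has_shape_13254_map_tree[of "\<lambda>_. ()" t]
  by (simp only: map_tree_relabel_const)

lemma size_if_in_trees: "T \<in> trees n \<Longrightarrow> size T = n"
  using length_inorder[of T] by (simp add: trees_def del: upt_Suc)

definition spine_flip :: "nat tree \<Rightarrow> nat tree" where
  "spine_flip T = relabel 1 (rev_spines T)"

lemma spine_flip_in_trees: "T \<in> trees n \<Longrightarrow> spine_flip T \<in> trees n"
  by (simp add: spine_flip_def trees_def inorder_relabel size_rev_spine_onto size_if_in_trees)

lemma spine_flip_spine_flip:
  assumes "T \<in> trees n"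
  shows "spine_flip (spine_flip T) = T"
proof -
  \<comment> \<open>relabel only sees the shape of a tree, so the inner relabelling can be erased\<close>
  let ?shape = "map_tree (\<lambda>_. ())"
  have "spine_flip (spine_flip T) = relabel 1 (?shape (rev_spines (relabel 1 (rev_spines T))))"
    by (simp only: spine_flip_def relabel_map_tree)
  also have "\<dots> = relabel 1 (rev_spines (?shape (rev_spines T)))"
    by (simp only: map_tree_rev_spine_onto map_tree_relabel_const tree.map(1))
  also have "\<dots> = relabel 1 T"
    by (simp only: map_tree_rev_spine_onto rev_spines_rev_spines relabel_map_tree tree.map(1))
  also have "\<dots> = T"
    using assms by (intro relabel_eq_self) (simp add: trees_def size_if_in_trees)
  finally show ?thesis .
qed

lemma has_shape_13254_spine_flip: "has_shape_13254 (spine_flip T) \<longleftrightarrow> has_shape_21435 T"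
  by (simp add: spine_flip_def has_shape_13254_relabel has_shape_13254_rev_spines)

lemma has_shape_21435_spine_flip: "has_shape_21435 (spine_flip T) \<longleftrightarrow> has_shape_13254 T"
  by (simp add: spine_flip_def has_shape_21435_relabel has_shape_21435_rev_spines)

lemma bij_betw_spine_flip:
  "bij_betw spine_flip {T \<in> trees n. \<not> has_shape_21435 T} {T \<in> trees n. \<not> has_shape_13254 T}"
  by (rule bij_betw_byWitness[where f' = spine_flip])
    (auto simp: spine_flip_spine_flip spine_flip_in_trees has_shape_13254_spine_flip has_shape_21435_spine_flip)

theorem lemma22:
  fixes x y z u v :: bool and n :: nat
  shows "card (avoiders n P21435 (e21435 x y z)) = card (avoiders n P13254 (e13254 u v))"
  unfolding avoiders_P21435 avoiders_P13254 by (rule bij_betw_same_card[OF bij_betw_spine_flip])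

end
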